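(* In the setting described in the context, there exists $I^*\in\mathcal{I}_c$ such that $$\sup_{I\in\mathcal{I}_c}\rho_b\big(u(w-X+I(X)-\pi_I)\big)=\rho_b\big(u(w-X+I^*(X)-\pi_{I^*})\big),$$ where $\pi_I=\pi(I(X))$.
   Context: Let $(\Omega,\mathcal{F},\mathbb{P})$ be a probability space, and let $X \ge 0$ be a random variable with $\mathbb{E}X<\infty$. Set $$\mathcal{I}=\{I:[0,\infty)\to[0,\infty):0\le I(x)\le x \ \forall x\},$$ $$\mathcal{I}_c=\{I\in\mathcal{I}: 0\le I(x)-I(y)\le x-y \ \forall\, 0\le y\le x\}.$$ Let $\mathcal{D}$ be the set of continuous concave $j:[0,1]\to[0,\infty)$ with $j(0)=0$; these need not be monotone. For such $j$, or for $j=b$ below, and a random variable $Y$ essentially bounded below with $S_Y(t)=\mathbb{P}(Y>t)$, set $$\rho_j(Y)=\int_{-\infty}^0 \big(j(S_Y(t))-j(1)\big)\,dt+\int_0^\infty j(S_Y(t))\,dt.$$ The premium is $\pi(Y)=(1+\theta)\mathbb{E}Y+\rho_k(Y)$, where $\theta>-1$ and $k\in\mathcal{D}$ with $k(0)=k(1)=0$. The buyer has wealth $w$ and a strictly increasing concave utility $u\in C^2(\mathbb{R})$. She also has a continuously differentiable, strictly increasing, convex $b:[0,1]\to[0,1]$ with $b(0)=0$ and $b(1)=1$. It is assumed that $\pi(I(X))$ and $\rho_b(u(w-X+I(X)-\pi(I(X))))$ are finite for all $I\in\mathcal{I}$. *)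

theory Defs
  imports "HOL-Probability.Probability"
begin

definition surv :: "'a measure \<Rightarrow> ('a \<Rightarrow> real) \<Rightarrow> real \<Rightarrow> real" where
  "surv M Y t = measure M {\<omega> \<in> space M. Y \<omega> > t}"

definition rho :: "'a measure \<Rightarrow> (real \<Rightarrow> real) \<Rightarrow> ('a \<Rightarrow> real) \<Rightarrow> real" where
  "rho M j Y = (LINT t:{..0}|lborel. j (surv M Y t) - j 1) + (LINT t:{0..}|lborel. j (surv M Y t))"

definition rho_finite :: "'a measure \<Rightarrow> (real \<Rightarrow> real) \<Rightarrow> ('a \<Rightarrow> real) \<Rightarrow> bool" where
  "rho_finite M j Y \<longleftrightarrow>
     set_integrable lborel {..0} (\<lambda>t. j (surv M Y t) - j 1) \<and>
     set_integrable lborel {0..} (\<lambda>t. j (surv M Y t))"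

definition premium :: "'a measure \<Rightarrow> real \<Rightarrow> (real \<Rightarrow> real) \<Rightarrow> ('a \<Rightarrow> real) \<Rightarrow> real" where
  "premium M \<theta> k Y = (1 + \<theta>) * (\<integral>\<omega>. Y \<omega> \<partial>M) + rho M k Y"

definition Ind :: "(real \<Rightarrow> real) set" where
  "Ind = {I. \<forall>x\<ge>0. 0 \<le> I x \<and> I x \<le> x}"

definition Ind_c :: "(real \<Rightarrow> real) set" where
  "Ind_c = {I \<in> Ind. \<forall>x y. 0 \<le> y \<and> y \<le> x \<longrightarrow> 0 \<le> I x - I y \<and> I x - I y \<le> x - y}"

definition Dset :: "(real \<Rightarrow> real) set" where
  "Dset = {j. continuous_on {0..1} j \<and> concave_on {0..1} j \<and>
              (\<forall>x\<in>{0..1}. 0 \<le> j x) \<and> j 0 = 0}"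

definition objective :: "'a measure \<Rightarrow> ('a \<Rightarrow> real) \<Rightarrow> real \<Rightarrow> (real \<Rightarrow> real) \<Rightarrow> real
    \<Rightarrow> (real \<Rightarrow> real) \<Rightarrow> (real \<Rightarrow> real) \<Rightarrow> (real \<Rightarrow> real) \<Rightarrow> real" where
  "objective M X \<theta> k w u b I =
     rho M b (\<lambda>\<omega>. u (w - X \<omega> + I (X \<omega>) - premium M \<theta> k (\<lambda>\<omega>'. I (X \<omega>'))))"

end

theory Submission
  imports Defs
begin

text \<open>Extending an indemnity of Ind_c by 0 to negative losses makes it 1-Lipschitz on the
  whole line with |I x| <= |x|, so a diagonal argument gives every sequence of indemnities a
  pointwise convergent subsequence with limit again in Ind_c. The objective is upper
  semicontinuous along such limits: the expected indemnity converges by dominated convergence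
  and rho_k is lower semicontinuous by Fatou's lemma, so the premium is lower semicontinuous and
  the terminal utility upper semicontinuous; survival functions are then asymptotically bounded
  from above at every non-atom, and since the terminal utility is bounded by u w, the objective
  is a constant minus the integral of a nonnegative function of these survival functions, to
  which Fatou's lemma applies again. Hence a subsequence of a maximising sequence converges to a
  maximiser. Only continuity and monotonicity of u, b and k enter.\<close>

section \<open>Survival functions\<close>

lemma (in prob_space) surv_range: "surv M Z t \<in> {0..1}"
  unfolding surv_def by simp

lemma surv_cong: "(\<And>\<omega>. \<omega> \<in> space M \<Longrightarrow> Z \<omega> = Z' \<omega>) \<Longrightarrow> surv M Z = surv M Z'"
  unfolding surv_def by (metis (mono_tags, lifting) Collect_cong)

lemma (in finite_measure) antimono_surv:
  assumes "Z \<in> borel_measurable M"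
  shows "antimono (surv M Z)"
proof (rule antimonoI)
  fix s t :: real assume "s \<le> t"
  moreover have "{\<omega>\<in>space M. Z \<omega> > s} \<in> sets M" using assms by measurable
  ultimately show "surv M Z t \<le> surv M Z s"
    unfolding surv_def by (auto intro!: finite_measure_mono)
qed

lemma (in finite_measure) AE_lborel_level_set_null:
  assumes "Z \<in> borel_measurable M"
  shows "AE t in lborel. measure M {\<omega>\<in>space M. Z \<omega> = t} = 0"
proof -
  interpret D: finite_measure "distr M borel Z"
    by (rule finite_measure_distr) (use assms in auto)
  have "measure (distr M borel Z) {t} = measure M {\<omega>\<in>space M. Z \<omega> = t}" for t
    using measure_distr[OF assms, of "{t}"] by (simp add: vimage_def Int_def conj_commute)
  then show ?thesis
    using countable_imp_null_set_lborel[OF D.countable_support] by (auto intro: AE_I')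
qed

lemma (in finite_measure) AE_ne_of_measure_level_set_zero:
  fixes Z :: "'a \<Rightarrow> real"
  assumes "Z \<in> borel_measurable M" "measure M {\<omega>\<in>space M. Z \<omega> = t} = 0"
  shows "AE \<omega> in M. Z \<omega> \<noteq> t"
proof (rule AE_I'[of "{\<omega>\<in>space M. Z \<omega> = t}"])
  have "{\<omega>\<in>space M. Z \<omega> = t} \<in> sets M" using assms(1) by measurable
  then show "{\<omega>\<in>space M. Z \<omega> = t} \<in> null_sets M"
    using assms(2) by (auto simp: emeasure_eq_measure)
qed auto

lemma (in finite_measure) measure_tendsto_of_AE_indicator:
  assumes "\<And>n. As n \<in> sets M" "A \<in> sets M"
    and "AE \<omega> in M. (\<lambda>n. indicator (As n) \<omega>) \<longlonglongrightarrow> (indicator A \<omega> :: real)"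
  shows "(\<lambda>n. measure M (As n)) \<longlonglongrightarrow> measure M A"
proof -
  have "(\<lambda>n. integral\<^sup>L M (indicator (As n))) \<longlonglongrightarrow> integral\<^sup>L M (indicator A :: _ \<Rightarrow> real)"
    by (rule integral_dominated_convergence[where w="\<lambda>_. 1"]) (use assms in auto)
  then show ?thesis
    using assms(1,2) by (simp add: Int_absorb2 sets.sets_into_space)
qed

lemma (in finite_measure) surv_tendsto:
  assumes "\<And>n. Zs n \<in> borel_measurable M" "Z \<in> borel_measurable M"
    and "AE \<omega> in M. (\<lambda>n. Zs n \<omega>) \<longlonglongrightarrow> Z \<omega>"
    and "measure M {\<omega>\<in>space M. Z \<omega> = t} = 0"
  shows "(\<lambda>n. surv M (Zs n) t) \<longlonglongrightarrow> surv M Z t"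
  unfolding surv_def
proof (rule measure_tendsto_of_AE_indicator)
  show "AE \<omega> in M. (\<lambda>n. indicator {\<omega>\<in>space M. Zs n \<omega> > t} \<omega>) \<longlonglongrightarrow>
                    (indicator {\<omega>\<in>space M. Z \<omega> > t} \<omega> :: real)"
    using AE_space AE_ne_of_measure_level_set_zero[OF assms(2,4)] assms(3)
  proof eventually_elim
    case (elim \<omega>)
    then consider "Z \<omega> > t" | "Z \<omega> < t" by fastforce
    then have "eventually (\<lambda>n. Zs n \<omega> > t \<longleftrightarrow> Z \<omega> > t) sequentially"
      by cases (use elim(3) order_tendstoD in \<open>fastforce elim: eventually_mono\<close>)+
    then show ?case
      by (rule tendsto_eventually[OF eventually_mono]) (use elim(1) in \<open>auto simp: indicator_def\<close>)
  qed
qed (use assms in measurable)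

lemma (in prob_space) surv_limsup_majorant:
  assumes "\<And>n. Zs n \<in> borel_measurable M" "Z \<in> borel_measurable M"
    and "AE \<omega> in M. \<forall>e>0. eventually (\<lambda>n. Zs n \<omega> < Z \<omega> + e) sequentially"
    and "measure M {\<omega>\<in>space M. Z \<omega> = t} = 0"
  shows "\<exists>a. a \<longlonglongrightarrow> surv M Z t \<and> (\<forall>n. surv M (Zs n) t \<le> a n \<and> a n \<le> 1)"
proof (intro exI conjI allI)
  let ?A = "\<lambda>n. {\<omega>\<in>space M. Zs n \<omega> > t \<or> Z \<omega> > t}"
  have A_sets: "?A n \<in> sets M" for n using assms(1,2) by measurable
  show "surv M (Zs n) t \<le> measure M (?A n)" "measure M (?A n) \<le> 1" for n
    unfolding surv_def using A_sets by (auto intro!: finite_measure_mono)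
  show "(\<lambda>n. measure M (?A n)) \<longlonglongrightarrow> surv M Z t"
    unfolding surv_def
  proof (rule measure_tendsto_of_AE_indicator)
    show "AE \<omega> in M. (\<lambda>n. indicator (?A n) \<omega>) \<longlonglongrightarrow> (indicator {\<omega>\<in>space M. Z \<omega> > t} \<omega> :: real)"
      using AE_space AE_ne_of_measure_level_set_zero[OF assms(2,4)] assms(3)
    proof eventually_elim
      case (elim \<omega>)
      then consider "Z \<omega> > t" | "Z \<omega> < t" by fastforce
      then have "eventually (\<lambda>n. (Zs n \<omega> > t \<or> Z \<omega> > t) \<longleftrightarrow> Z \<omega> > t) sequentially"
      proof cases
        case 2
        then have "eventually (\<lambda>n. Zs n \<omega> < Z \<omega> + (t - Z \<omega>)) sequentially"
          using 2 by (intro elim(3)[rule_format]) simp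
        then show ?thesis by eventually_elim auto
      qed simp
      then show ?case
        by (rule tendsto_eventually[OF eventually_mono]) (use elim(1) in \<open>auto simp: indicator_def\<close>)
    qed
  qed (use A_sets assms(2) in measurable)
qed

section \<open>Semicontinuity\<close>

lemma Fatou_integral_real:
  fixes G :: "nat \<Rightarrow> 'a \<Rightarrow> real"
  assumes G_int: "\<And>n. integrable N (G n)" and G_nonneg: "\<And>n x. 0 \<le> G n x"
    and g_int: "integrable N g" and g_nonneg: "\<And>x. 0 \<le> g x"
    and liminf: "AE x in N. \<forall>d < g x. eventually (\<lambda>n. d < G n x) sequentially"
    and "d < integral\<^sup>L N g"
  shows "eventually (\<lambda>n. d < integral\<^sup>L N (G n)) sequentially"
proof (cases "d < 0")
  case True
  have "0 \<le> integral\<^sup>L N (G n)" for n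
    using G_nonneg by (intro integral_nonneg_AE) simp
  then show ?thesis
    using True by (intro always_eventually allI) (rule less_le_trans)
next
  case False
  have pointwise: "ennreal (g x) \<le> liminf (\<lambda>n. ennreal (G n x))"
    if "\<forall>d < g x. eventually (\<lambda>n. d < G n x) sequentially" for x
    unfolding le_Liminf_iff
  proof (intro allI impI)
    fix y assume y: "y < ennreal (g x)"
    define r where "r = enn2real y"
    have r: "y = ennreal r" "0 \<le> r"
      using y order.strict_trans[OF y ennreal_less_top] by (simp_all add: r_def)
    with y have "r < g x" by (simp add: ennreal_less_iff)
    show "eventually (\<lambda>n. y < ennreal (G n x)) sequentially"
      using that[rule_format, OF \<open>r < g x\<close>] by eventually_elim (use r in \<open>simp add: ennreal_less_iff\<close>)
  qed
  from liminf have "AE x in N. ennreal (g x) \<le> liminf (\<lambda>n. ennreal (G n x))"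
    by eventually_elim (rule pointwise)
  have "ennreal d < ennreal (integral\<^sup>L N g)"
    using False assms(6) by (simp add: ennreal_less_iff)
  also have "\<dots> = (\<integral>\<^sup>+ x. ennreal (g x) \<partial>N)"
    using nn_integral_eq_integral[OF g_int] g_nonneg by simp
  also have "\<dots> \<le> (\<integral>\<^sup>+ x. liminf (\<lambda>n. ennreal (G n x)) \<partial>N)"
    by (rule nn_integral_mono_AE) fact
  also have "\<dots> \<le> liminf (\<lambda>n. \<integral>\<^sup>+ x. ennreal (G n x) \<partial>N)"
    by (rule nn_integral_liminf) (use G_int in auto)
  also have "(\<lambda>n. \<integral>\<^sup>+ x. ennreal (G n x) \<partial>N) = (\<lambda>n. ennreal (integral\<^sup>L N (G n)))"
    using nn_integral_eq_integral[OF G_int] G_nonneg by simp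
  finally show ?thesis
    by (rule less_LiminfD[THEN eventually_mono]) (use False in \<open>simp add: ennreal_less_iff\<close>)
qed

lemma mono_isCont_eventually_less:
  fixes u :: "real \<Rightarrow> real"
  assumes "mono u" "isCont u x" "\<And>\<delta>. \<delta> > 0 \<Longrightarrow> eventually (\<lambda>n. s n < x + \<delta>) F" "e > 0"
  shows "eventually (\<lambda>n. u (s n) < u x + e) F"
proof -
  obtain \<delta> where "\<delta> > 0" and \<delta>: "\<And>y. \<bar>y - x\<bar> < \<delta> \<Longrightarrow> \<bar>u y - u x\<bar> < e"
    using assms(2,4) unfolding continuous_at_eps_delta dist_real_def by blast
  have "u (x + \<delta> / 2) < u x + e"
    using \<delta>[of "x + \<delta> / 2"] \<open>\<delta> > 0\<close> by simp
  moreover have "eventually (\<lambda>n. s n < x + \<delta> / 2) F"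
    using assms(3) \<open>\<delta> > 0\<close> by simp
  ultimately show ?thesis
    by (elim eventually_mono) (meson assms(1) monoD less_imp_le le_less_trans)
qed

lemma SUP_attained_if_sequentially_usc:
  fixes F :: "'b \<Rightarrow> real"
  assumes "A \<noteq> {}"
    and usc: "\<And>K :: nat \<Rightarrow> 'b. (\<And>n. K n \<in> A) \<Longrightarrow> \<exists>a\<in>A. \<exists>r. strict_mono r \<and>
                (\<forall>c. F a < c \<longrightarrow> eventually (\<lambda>n. F (K (r n)) < c) sequentially)"
  shows "\<exists>a\<in>A. (SUP x\<in>A. ereal (F x)) = ereal (F a)"
proof -
  let ?S = "SUP x\<in>A. ereal (F x)"
  obtain f where f: "incseq f" "range f \<subseteq> (\<lambda>x. ereal (F x)) ` A" "?S = Sup (range f)"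
    using Sup_countable_SUP[of "(\<lambda>x. ereal (F x)) ` A"] assms(1) by auto
  then have "\<forall>n. \<exists>x\<in>A. f n = ereal (F x)" by blast
  then obtain K where K: "\<And>n. K n \<in> A" "\<And>n. f n = ereal (F (K n))" by metis
  obtain a r where "a \<in> A" "strict_mono r"
    and a: "\<And>c. F a < c \<Longrightarrow> eventually (\<lambda>n. F (K (r n)) < c) sequentially"
    using usc[of K, OF K(1)] by blast
  have f_r: "(f \<circ> r) \<longlonglongrightarrow> ?S"
    unfolding f(3) by (rule LIMSEQ_subseq_LIMSEQ[OF LIMSEQ_SUP[OF f(1)] \<open>strict_mono r\<close>])
  have "?S \<le> ereal (F a)"
  proof (rule ccontr)
    assume "\<not> ?S \<le> ereal (F a)"
    then obtain c where c: "ereal (F a) < ereal c" "ereal c < ?S"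
      using ereal_dense2 not_le by metis
    have "eventually (\<lambda>n. ereal c < f (r n) \<and> F (K (r n)) < c) sequentially"
      using order_tendstoD(1)[OF f_r c(2)] a[of c] c(1) by (auto simp: eventually_conj_iff)
    then have "eventually (\<lambda>n. False) sequentially"
      by eventually_elim (auto simp: K(2))
    then show False by simp
  qed
  moreover have "ereal (F a) \<le> ?S" using \<open>a \<in> A\<close> by (rule SUP_upper)
  ultimately show ?thesis using \<open>a \<in> A\<close> by auto
qed

section \<open>Pointwise compactness of equi-Lipschitz sequences\<close>

lemma convergent_subsequence_on_countable:
  fixes f :: "nat \<Rightarrow> 'a \<Rightarrow> 'b::heine_borel"
  assumes "countable S" and bounded: "\<And>x. x \<in> S \<Longrightarrow> bounded (range (\<lambda>n. f n x))"
  shows "\<exists>r. strict_mono r \<and> (\<forall>x\<in>S. convergent (\<lambda>n. f (r n) x))"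
proof (cases "S = {}")
  case True
  then show ?thesis using strict_mono_id by blast
next
  case False
  define q where "q = from_nat_into S"
  have S_eq: "S = range q"
    unfolding q_def using range_from_nat_into[OF False \<open>countable S\<close>] by simp
  define P where "P m s \<longleftrightarrow> convergent (\<lambda>i. f (s i) (q m))" for m and s :: "nat \<Rightarrow> nat"
  interpret subseqs P
  proof
    fix m and s :: "nat \<Rightarrow> nat"
    have "bounded (range (\<lambda>i. f (s i) (q m)))"
      by (rule bounded_subset[OF bounded]) (auto simp: S_eq)
    then obtain l r where "strict_mono r" "((\<lambda>i. f (s i) (q m)) \<circ> r) \<longlonglongrightarrow> l"
      using bounded_imp_convergent_subsequence by blast
    then show "\<exists>r. strict_mono r \<and> P m (s \<circ> r)"
      unfolding P_def convergent_def by (auto simp: o_def)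
  qed
  have "convergent (\<lambda>i. f (diagseq i) (q m))" for m
  proof -
    have "P m (diagseq \<circ> (+) (Suc m))"
      by (rule diagseq_holds) (auto simp: P_def o_def intro: convergent_subseq_convergent[unfolded o_def])
    then obtain l where "(\<lambda>i. f (diagseq (i + Suc m)) (q m)) \<longlonglongrightarrow> l"
      unfolding P_def convergent_def by (auto simp: o_def add.commute)
    then show ?thesis
      unfolding convergent_def by (blast intro: LIMSEQ_offset)
  qed
  then show ?thesis using subseq_diagseq S_eq by blast
qed

lemma equilipschitz_convergent_of_dense:
  fixes f :: "nat \<Rightarrow> 'a::metric_space \<Rightarrow> 'b::complete_space"
  assumes lipschitz: "\<And>n. L-lipschitz_on UNIV (f n)"
    and dense: "\<And>x e. e > 0 \<Longrightarrow> \<exists>d\<in>D. dist d x < e"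
    and convergent_on_D: "\<And>d. d \<in> D \<Longrightarrow> convergent (\<lambda>n. f n d)"
  shows "convergent (\<lambda>n. f n x)"
proof -
  have L: "0 \<le> L" using lipschitz lipschitz_on_nonneg by blast
  have "Cauchy (\<lambda>n. f n x)"
  proof (rule metric_CauchyI)
    fix e :: real assume "0 < e"
    define \<delta> where "\<delta> = e / (3 * (L + 1))"
    have "\<delta> > 0" using \<open>0 < e\<close> L by (simp add: \<delta>_def)
    then obtain d where "d \<in> D" and d: "dist d x < \<delta>" using dense by blast
    then obtain N where N: "\<forall>m\<ge>N. \<forall>n\<ge>N. dist (f m d) (f n d) < e / 3"
      using convergent_on_D metric_CauchyD[of "\<lambda>n. f n d" "e / 3"] \<open>0 < e\<close>
      by (auto simp: Cauchy_convergent_iff)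
    have near: "dist (f n x) (f n d) \<le> L * \<delta>" for n
      using lipschitz_onD[OF lipschitz, of x d n] d L by (simp add: dist_commute mult_left_mono order_trans)
    have "L * \<delta> < e / 3"
      using \<open>0 < e\<close> L by (simp add: \<delta>_def field_simps)
    show "\<exists>N. \<forall>m\<ge>N. \<forall>n\<ge>N. dist (f m x) (f n x) < e"
    proof (intro exI allI impI)
      fix m n assume "N \<le> m" "N \<le> n"
      have "dist (f m x) (f n x) \<le> dist (f m x) (f m d) + dist (f m d) (f n x)"
        by (rule dist_triangle)
      also have "\<dots> \<le> dist (f m x) (f m d) + dist (f m d) (f n d) + dist (f n x) (f n d)"
        using dist_triangle[of "f m d" "f n x" "f n d"] by (simp add: dist_commute)
      also have "\<dots> < e"
        using near[of m] near[of n] N \<open>N \<le> m\<close> \<open>N \<le> n\<close> \<open>L * \<delta> < e / 3\<close> by fastforce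
      finally show "dist (f m x) (f n x) < e" .
    qed
  qed
  then show ?thesis by (simp add: Cauchy_convergent_iff)
qed

lemma equilipschitz_convergent_subsequence:
  fixes f :: "nat \<Rightarrow> 'a::{metric_space,second_countable_topology} \<Rightarrow> 'b::heine_borel"
  assumes lipschitz: "\<And>n. L-lipschitz_on UNIV (f n)"
    and bounded: "\<And>x. bounded (range (\<lambda>n. f n x))"
  shows "\<exists>r. strict_mono r \<and> (\<forall>x. convergent (\<lambda>n. f (r n) x))"
proof -
  obtain D :: "'a set" where "countable D" and D: "\<And>X. open X \<Longrightarrow> X \<noteq> {} \<Longrightarrow> \<exists>d\<in>D. d \<in> X"
    by (rule countable_dense_setE) blast
  obtain r where r: "strict_mono r" "\<forall>d\<in>D. convergent (\<lambda>n. f (r n) d)"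
    using convergent_subsequence_on_countable[of D f] \<open>countable D\<close> bounded by blast
  have "convergent (\<lambda>n. f (r n) x)" for x
  proof (rule equilipschitz_convergent_of_dense[where L=L and D=D])
    show "\<exists>d\<in>D. dist d y < e" if "e > 0" for y e
      using D[of "ball y e"] that by (auto simp: dist_commute)
  qed (use lipschitz r in auto)
  with r show ?thesis by blast
qed

section \<open>Indemnities vanishing on negative losses\<close>

definition Ind_c0 :: "(real \<Rightarrow> real) set" where
  "Ind_c0 = {J \<in> Ind_c. \<forall>x<0. J x = 0}"

definition zero_extension :: "(real \<Rightarrow> real) \<Rightarrow> real \<Rightarrow> real" where
  "zero_extension J x = (if 0 \<le> x then J x else 0)"

lemma zero_extension_in_Ind_c0: "J \<in> Ind_c \<Longrightarrow> zero_extension J \<in> Ind_c0"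
  unfolding Ind_c0_def Ind_c_def Ind_def zero_extension_def by auto

lemma Ind_c0_subset_Ind_c: "Ind_c0 \<subseteq> Ind_c"
  unfolding Ind_c0_def by auto

lemma Ind_c0_bounds: "J \<in> Ind_c0 \<Longrightarrow> 0 \<le> x \<Longrightarrow> 0 \<le> J x \<and> J x \<le> x"
  unfolding Ind_c0_def Ind_c_def Ind_def by auto

lemma Ind_c0_lipschitz:
  assumes "J \<in> Ind_c0"
  shows "1-lipschitz_on UNIV J"
proof (rule lipschitz_onI)
  have increments: "0 \<le> J x - J y \<and> J x - J y \<le> x - y" if "y \<le> x" for x y
    using assms that unfolding Ind_c0_def Ind_c_def Ind_def
    by (cases "0 \<le> y"; cases "0 \<le> x") auto
  show "dist (J x) (J y) \<le> 1 * dist x y" for x y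
    using increments[of x y] increments[of y x] by (cases "y \<le> x") (auto simp: dist_real_def)
qed simp

lemma Ind_c0_abs_le:
  assumes "J \<in> Ind_c0"
  shows "\<bar>J x\<bar> \<le> \<bar>x\<bar>"
proof -
  have "J 0 = 0" using Ind_c0_bounds[OF assms, of 0] by simp
  then show ?thesis using lipschitz_onD[OF Ind_c0_lipschitz[OF assms], of x 0] by (simp add: dist_real_def)
qed

lemma Ind_c0_borel_measurable: "J \<in> Ind_c0 \<Longrightarrow> J \<in> borel_measurable borel"
  by (intro borel_measurable_continuous_onI lipschitz_on_continuous_on[OF Ind_c0_lipschitz])

lemma Ind_c0_closed_pointwise:
  assumes Js: "\<And>n. Js n \<in> Ind_c0" and lim: "\<And>x. (\<lambda>n. Js n x) \<longlonglongrightarrow> J x"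
  shows "J \<in> Ind_c0"
proof -
  have "0 \<le> J x - J y \<and> J x - J y \<le> x - y" if "0 \<le> y" "y \<le> x" for x y
  proof -
    have diff: "(\<lambda>n. Js n x - Js n y) \<longlonglongrightarrow> J x - J y" by (intro tendsto_diff lim)
    have "\<forall>n. 0 \<le> Js n x - Js n y \<and> Js n x - Js n y \<le> x - y"
      using Js that unfolding Ind_c0_def Ind_c_def by blast
    then show ?thesis
      using tendsto_lowerbound[OF diff, of 0] tendsto_upperbound[OF diff, of "x - y"] by auto
  qed
  moreover have "0 \<le> J x \<and> J x \<le> x" if "0 \<le> x" for x
    using Ind_c0_bounds[OF Js that] tendsto_lowerbound[OF lim, of 0 x] tendsto_upperbound[OF lim, of x x]
    by auto
  moreover have "J x = 0" if "x < 0" for x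
  proof -
    have "(\<lambda>n. Js n x) = (\<lambda>_. 0)" using Js that unfolding Ind_c0_def by auto
    then show ?thesis using LIMSEQ_unique[OF lim[of x]] by simp
  qed
  ultimately show ?thesis
    unfolding Ind_c0_def Ind_c_def Ind_def by blast
qed

lemma Ind_c0_convergent_subsequence:
  fixes Is :: "nat \<Rightarrow> real \<Rightarrow> real"
  assumes "\<And>n. Is n \<in> Ind_c0"
  obtains r I where "strict_mono r" "I \<in> Ind_c0" "\<And>x. (\<lambda>n. Is (r n) x) \<longlonglongrightarrow> I x"
proof -
  have "bounded (range (\<lambda>n. Is n x))" for x
    using Ind_c0_abs_le[OF assms] by (intro boundedI[where B="\<bar>x\<bar>"]) auto
  then obtain r where "strict_mono r" and conv: "\<And>x. convergent (\<lambda>n. Is (r n) x)"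
    using equilipschitz_convergent_subsequence[of 1 Is] Ind_c0_lipschitz[OF assms] by blast
  define I where "I x = lim (\<lambda>n. Is (r n) x)" for x
  have lim: "(\<lambda>n. Is (r n) x) \<longlonglongrightarrow> I x" for x
    unfolding I_def using conv convergent_LIMSEQ_iff by blast
  show thesis
    by (rule that[OF \<open>strict_mono r\<close> Ind_c0_closed_pointwise[OF assms lim] lim])
qed

lemma objective_cong:
  assumes "\<And>\<omega>. \<omega> \<in> space M \<Longrightarrow> I (X \<omega>) = I' (X \<omega>)"
  shows "objective M X \<theta> k w u b I = objective M X \<theta> k w u b I'"
proof -
  have "premium M \<theta> k (\<lambda>\<omega>. I (X \<omega>)) = premium M \<theta> k (\<lambda>\<omega>. I' (X \<omega>))"
    unfolding premium_def rho_def using assms surv_cong[of M "\<lambda>\<omega>. I (X \<omega>)" "\<lambda>\<omega>. I' (X \<omega>)"]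
    by (simp cong: Bochner_Integration.integral_cong)
  then show ?thesis
    unfolding objective_def rho_def using assms by (simp cong: surv_cong)
qed

locale indemnity_problem = prob_space M for M :: "'a measure" +
  fixes X :: "'a \<Rightarrow> real" and \<theta> w :: real and k u b :: "real \<Rightarrow> real"
  assumes X_measurable: "X \<in> borel_measurable M" and X_nonneg: "\<forall>\<omega>\<in>space M. 0 \<le> X \<omega>"
    and X_integrable: "integrable M X"
    and loading: "\<theta> > -1"
    and k_continuous: "continuous_on {0..1} k" and k_nonneg: "\<forall>s\<in>{0..1}. 0 \<le> k s"
    and k_1: "k 1 = 0"
    and u_continuous: "continuous_on UNIV u" and u_mono: "mono u"
    and b_continuous: "continuous_on {0..1} b" and b_mono: "mono_on {0..1} b"
    and b_0: "b 0 = 0" and b_1: "b 1 = 1"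
    and rho_finite: "\<forall>I\<in>Ind. I \<in> borel_measurable borel \<longrightarrow>
           rho_finite M k (\<lambda>\<omega>. I (X \<omega>)) \<and>
           rho_finite M b (\<lambda>\<omega>. u (w - X \<omega> + I (X \<omega>) - premium M \<theta> k (\<lambda>\<omega>'. I (X \<omega>'))))"
begin

abbreviation obj :: "(real \<Rightarrow> real) \<Rightarrow> real" where
  "obj \<equiv> objective M X \<theta> k w u b"

definition indemnity :: "(real \<Rightarrow> real) \<Rightarrow> 'a \<Rightarrow> real" where
  "indemnity I = (\<lambda>\<omega>. I (X \<omega>))"

definition price :: "(real \<Rightarrow> real) \<Rightarrow> real" where
  "price I = premium M \<theta> k (indemnity I)"

definition terminal_utility :: "(real \<Rightarrow> real) \<Rightarrow> 'a \<Rightarrow> real" where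
  "terminal_utility I = (\<lambda>\<omega>. u (w - X \<omega> + I (X \<omega>) - price I))"

definition k_integrand :: "(real \<Rightarrow> real) \<Rightarrow> real \<Rightarrow> real" where
  "k_integrand I t = indicator {0..} t * k (surv M (indemnity I) t)"

definition utility_cap :: real where
  "utility_cap = \<bar>u w\<bar>"

text \<open>Since premiums are nonnegative, the terminal utility never exceeds u w <= utility_cap. Hence
  obj I = utility_cap - (LINT t|lborel. shortfall I t) with a nonnegative integrand, which
  turns upper semicontinuity of the objective into Fatou's lemma.\<close>
definition shortfall :: "(real \<Rightarrow> real) \<Rightarrow> real \<Rightarrow> real" where
  "shortfall I t = indicator {..utility_cap} t * (1 - b (surv M (terminal_utility I) t))"

lemma b_range: "s \<in> {0..1} \<Longrightarrow> b s \<in> {0..1}"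
  using mono_onD[OF b_mono, of 0 s] mono_onD[OF b_mono, of s 1] b_0 b_1 by auto

lemma indemnity_measurable: "I \<in> Ind_c0 \<Longrightarrow> indemnity I \<in> borel_measurable M"
  unfolding indemnity_def using Ind_c0_borel_measurable X_measurable by measurable

lemma indemnity_bounds: "I \<in> Ind_c0 \<Longrightarrow> \<omega> \<in> space M \<Longrightarrow> 0 \<le> indemnity I \<omega> \<and> indemnity I \<omega> \<le> X \<omega>"
  unfolding indemnity_def using Ind_c0_bounds X_nonneg by auto

lemma surv_indemnity_neg:
  assumes "I \<in> Ind_c0" "t < 0"
  shows "surv M (indemnity I) t = 1"
proof -
  have "{\<omega>\<in>space M. indemnity I \<omega> > t} = space M"
    using indemnity_bounds[OF assms(1)] assms(2) by force
  then show ?thesis unfolding surv_def by (simp add: prob_space)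
qed

lemma k_integrand_nonneg: "0 \<le> k_integrand I t"
  unfolding k_integrand_def using k_nonneg surv_range by simp

lemma rho_finite_Ind_c0:
  "I \<in> Ind_c0 \<Longrightarrow> rho_finite M k (indemnity I) \<and> rho_finite M b (terminal_utility I)"
  using rho_finite Ind_c0_subset_Ind_c Ind_c0_borel_measurable
  unfolding terminal_utility_def price_def indemnity_def Ind_c_def by blast

lemma rho_k_indemnity:
  assumes "I \<in> Ind_c0"
  shows "integrable lborel (k_integrand I)" "rho M k (indemnity I) = integral\<^sup>L lborel (k_integrand I)"
proof -
  show "integrable lborel (k_integrand I)"
    using rho_finite_Ind_c0[OF assms]
    unfolding rho_finite_def set_integrable_def k_integrand_def by simp
  have "AE t in lborel. indicator {..0} t *\<^sub>R (k (surv M (indemnity I) t) - k 1) = (0::real)"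
    using AE_lborel_singleton[of 0]
    by eventually_elim (auto simp: indicator_def k_1 surv_indemnity_neg[OF assms])
  then have "(LINT t:{..0}|lborel. k (surv M (indemnity I) t) - k 1) = 0"
    unfolding set_lebesgue_integral_def by (rule integral_eq_zero_AE)
  then show "rho M k (indemnity I) = integral\<^sup>L lborel (k_integrand I)"
    unfolding rho_def set_lebesgue_integral_def k_integrand_def by simp
qed

lemma price_eq:
  "I \<in> Ind_c0 \<Longrightarrow> price I = (1 + \<theta>) * integral\<^sup>L M (indemnity I) + integral\<^sup>L lborel (k_integrand I)"
  unfolding price_def premium_def using rho_k_indemnity by simp

lemma price_nonneg:
  assumes "I \<in> Ind_c0"
  shows "0 \<le> price I"
proof -
  have "0 \<le> integral\<^sup>L M (indemnity I)"
    using indemnity_bounds[OF assms] by (intro integral_nonneg_AE) auto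
  moreover have "0 \<le> integral\<^sup>L lborel (k_integrand I)"
    using k_integrand_nonneg by (intro integral_nonneg_AE) auto
  ultimately show ?thesis
    unfolding price_eq[OF assms] using loading by simp
qed

lemma terminal_utility_measurable: "I \<in> Ind_c0 \<Longrightarrow> terminal_utility I \<in> borel_measurable M"
  unfolding terminal_utility_def
  using Ind_c0_borel_measurable X_measurable borel_measurable_continuous_onI[OF u_continuous]
  by measurable

lemma terminal_utility_le:
  assumes "I \<in> Ind_c0" "\<omega> \<in> space M"
  shows "terminal_utility I \<omega> \<le> u w"
proof -
  have "w - X \<omega> + I (X \<omega>) - price I \<le> w"
    using indemnity_bounds[OF assms] price_nonneg[OF assms(1)] unfolding indemnity_def by auto
  then show ?thesis unfolding terminal_utility_def using u_mono by (auto simp: mono_def)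
qed

lemma surv_terminal_utility_above_cap:
  assumes "I \<in> Ind_c0" "utility_cap < t"
  shows "surv M (terminal_utility I) t = 0"
proof -
  have "{\<omega>\<in>space M. terminal_utility I \<omega> > t} = {}"
    using terminal_utility_le[OF assms(1)] assms(2) unfolding utility_cap_def by force
  then show ?thesis unfolding surv_def by (metis measure_empty)
qed

lemma shortfall_nonneg: "0 \<le> shortfall I t"
  unfolding shortfall_def using b_range[OF surv_range] by simp

lemma shortfall_measurable:
  assumes "I \<in> Ind_c0"
  shows "shortfall I \<in> borel_measurable borel"
proof -
  have "mono (\<lambda>t. - b (surv M (terminal_utility I) t))"
    using antimono_surv[OF terminal_utility_measurable[OF assms]] b_mono surv_range
    by (auto simp: mono_def antimono_def mono_on_def)
  then have "(\<lambda>t. - (- b (surv M (terminal_utility I) t))) \<in> borel_measurable borel"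
    by (intro borel_measurable_uminus borel_measurable_mono)
  then show ?thesis unfolding shortfall_def by simp
qed

lemma objective_eq_shortfall:
  assumes "I \<in> Ind_c0"
  shows "integrable lborel (shortfall I)" "obj I = utility_cap - integral\<^sup>L lborel (shortfall I)"
proof -
  let ?S = "surv M (terminal_utility I)"
  define neg where "neg t = indicator {..0} t * (b (?S t) - b 1)" for t
  define pos where "pos t = indicator {0..} t * b (?S t)" for t
  define cap where "cap t = (indicator {0<..utility_cap} t :: real)" for t
  have neg_int: "integrable lborel neg" and pos_int: "integrable lborel pos"
    using rho_finite_Ind_c0[OF assms]
    unfolding rho_finite_def set_integrable_def neg_def pos_def by auto
  have cap_int: "integrable lborel cap" and cap_integral: "integral\<^sup>L lborel cap = utility_cap"
    unfolding cap_def utility_cap_def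
    by (auto intro!: integrable_real_indicator simp: emeasure_lborel_Ioc measure_lborel_Ioc)
  have "AE t in lborel. shortfall I t = cap t - neg t - pos t"
    using AE_lborel_singleton[of 0]
  proof eventually_elim
    case (elim t)
    have "0 \<le> utility_cap" unfolding utility_cap_def by simp
    then show ?case
      using elim surv_terminal_utility_above_cap[OF assms, of t]
      by (cases "t < 0"; cases "t \<le> utility_cap")
        (auto simp: shortfall_def neg_def pos_def cap_def b_0 b_1)
  qed
  moreover have diff_int: "integrable lborel (\<lambda>t. cap t - neg t - pos t)"
    using cap_int neg_int pos_int by auto
  ultimately show shortfall_int: "integrable lborel (shortfall I)"
    using shortfall_measurable[OF assms] by (auto intro: integrable_cong_AE_imp[OF diff_int] simp: eq_commute)
  have "integral\<^sup>L lborel (shortfall I) = integral\<^sup>L lborel (\<lambda>t. cap t - neg t - pos t)"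
    using \<open>AE t in lborel. shortfall I t = _\<close> shortfall_int diff_int
    by (intro integral_cong_AE) (auto intro: borel_measurable_integrable)
  also have "\<dots> = utility_cap - obj I"
    using cap_int neg_int pos_int cap_integral
    unfolding objective_def rho_def set_lebesgue_integral_def neg_def pos_def
      terminal_utility_def price_def indemnity_def
    by simp
  finally show "obj I = utility_cap - integral\<^sup>L lborel (shortfall I)" by simp
qed

context
  fixes Is :: "nat \<Rightarrow> real \<Rightarrow> real" and I :: "real \<Rightarrow> real"
  assumes Is_Ind_c0: "\<And>n. Is n \<in> Ind_c0" and I_Ind_c0: "I \<in> Ind_c0"
    and Is_tendsto: "\<And>x. (\<lambda>n. Is n x) \<longlonglongrightarrow> I x"
begin

lemma expectation_indemnity_tendsto:
  "(\<lambda>n. integral\<^sup>L M (indemnity (Is n))) \<longlonglongrightarrow> integral\<^sup>L M (indemnity I)"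
proof (rule integral_dominated_convergence[where w=X])
  show "AE \<omega> in M. norm (indemnity (Is n) \<omega>) \<le> X \<omega>" for n
    using indemnity_bounds[OF Is_Ind_c0] by (intro AE_I2) auto
  show "AE \<omega> in M. (\<lambda>n. indemnity (Is n) \<omega>) \<longlonglongrightarrow> indemnity I \<omega>"
    unfolding indemnity_def using Is_tendsto by simp
qed (auto intro: X_integrable indemnity_measurable Is_Ind_c0 I_Ind_c0)

lemma k_integrand_tendsto:
  "AE t in lborel. (\<lambda>n. k_integrand (Is n) t) \<longlonglongrightarrow> k_integrand I t"
  using AE_lborel_level_set_null[OF indemnity_measurable[OF I_Ind_c0]]
proof eventually_elim
  case (elim t)
  have "(\<lambda>n. surv M (indemnity (Is n)) t) \<longlonglongrightarrow> surv M (indemnity I) t"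
    using elim by (intro surv_tendsto indemnity_measurable Is_Ind_c0 I_Ind_c0 AE_I2)
      (simp add: indemnity_def Is_tendsto)
  then have "(\<lambda>n. k (surv M (indemnity (Is n)) t)) \<longlonglongrightarrow> k (surv M (indemnity I) t)"
    by (rule continuous_on_tendsto_compose[OF k_continuous]) (use surv_range in auto)
  then show ?case
    unfolding k_integrand_def by (rule tendsto_mult_left)
qed

lemma price_liminf:
  assumes "e > 0"
  shows "eventually (\<lambda>n. price I - e < price (Is n)) sequentially"
proof -
  have "eventually (\<lambda>n. integral\<^sup>L lborel (k_integrand I) - e / 2 < integral\<^sup>L lborel (k_integrand (Is n)))
      sequentially"
  proof (rule Fatou_integral_real)
    show "AE t in lborel. \<forall>d < k_integrand I t. eventually (\<lambda>n. d < k_integrand (Is n) t) sequentially"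
      using k_integrand_tendsto by eventually_elim (auto intro: order_tendstoD(1))
  qed (use assms k_integrand_nonneg rho_k_indemnity(1) Is_Ind_c0 I_Ind_c0 in auto)
  moreover have "eventually (\<lambda>n. (1 + \<theta>) * integral\<^sup>L M (indemnity I) - e / 2
      < (1 + \<theta>) * integral\<^sup>L M (indemnity (Is n))) sequentially"
    by (rule order_tendstoD(1)[OF tendsto_mult_left[OF expectation_indemnity_tendsto]]) (use assms in simp)
  ultimately show ?thesis
    by eventually_elim (simp add: price_eq[OF Is_Ind_c0] price_eq[OF I_Ind_c0])
qed

lemma terminal_utility_limsup:
  "AE \<omega> in M. \<forall>e>0. eventually (\<lambda>n. terminal_utility (Is n) \<omega> < terminal_utility I \<omega> + e) sequentially"
proof (intro AE_I2 allI impI)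
  fix \<omega> and e :: real assume "0 < e"
  have "eventually (\<lambda>n. w - X \<omega> + Is n (X \<omega>) - price (Is n) < w - X \<omega> + I (X \<omega>) - price I + \<delta>) sequentially"
    if "\<delta> > 0" for \<delta>
  proof -
    have "eventually (\<lambda>n. Is n (X \<omega>) < I (X \<omega>) + \<delta> / 2) sequentially"
      by (rule order_tendstoD(2)[OF Is_tendsto]) (use that in simp)
    moreover have "eventually (\<lambda>n. price I - \<delta> / 2 < price (Is n)) sequentially"
      by (rule price_liminf) (use that in simp)
    ultimately show ?thesis by eventually_elim simp
  qed
  then show "eventually (\<lambda>n. terminal_utility (Is n) \<omega> < terminal_utility I \<omega> + e) sequentially"
    unfolding terminal_utility_def
    by (intro mono_isCont_eventually_less[OF u_mono _ _ \<open>0 < e\<close>])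
      (use u_continuous in \<open>auto simp: continuous_on_eq_continuous_at\<close>)
qed

lemma shortfall_liminf:
  "AE t in lborel. \<forall>d < shortfall I t. eventually (\<lambda>n. d < shortfall (Is n) t) sequentially"
  using AE_lborel_level_set_null[OF terminal_utility_measurable[OF I_Ind_c0]]
proof eventually_elim
  case (elim t)
  obtain a where a: "a \<longlonglongrightarrow> surv M (terminal_utility I) t"
    and a_bounds: "\<And>n. surv M (terminal_utility (Is n)) t \<le> a n \<and> a n \<le> 1"
    using surv_limsup_majorant[OF terminal_utility_measurable[OF Is_Ind_c0]
        terminal_utility_measurable[OF I_Ind_c0] terminal_utility_limsup elim] by blast
  have a_range: "a n \<in> {0..1}" for n
    using a_bounds[of n] surv_range[of "terminal_utility (Is n)" t] by auto
  have "(\<lambda>n. b (a n)) \<longlonglongrightarrow> b (surv M (terminal_utility I) t)"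
    by (rule continuous_on_tendsto_compose[OF b_continuous a]) (use surv_range a_range in auto)
  then have lim: "(\<lambda>n. indicator {..utility_cap} t * (1 - b (a n))) \<longlonglongrightarrow> shortfall I t"
    unfolding shortfall_def by (intro tendsto_intros)
  have le: "indicator {..utility_cap} t * (1 - b (a n)) \<le> shortfall (Is n) t" for n
    using mono_onD[OF b_mono surv_range a_range a_bounds[THEN conjunct1]]
    unfolding shortfall_def by (auto simp: indicator_def)
  show ?case
  proof (intro allI impI)
    fix d assume "d < shortfall I t"
    from order_tendstoD(1)[OF lim this]
    show "eventually (\<lambda>n. d < shortfall (Is n) t) sequentially"
      by eventually_elim (rule less_le_trans[OF _ le])
  qed
qed

lemma objective_limsup:
  assumes "obj I < c"
  shows "eventually (\<lambda>n. obj (Is n) < c) sequentially"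
proof -
  have "eventually (\<lambda>n. utility_cap - c < integral\<^sup>L lborel (shortfall (Is n))) sequentially"
    by (rule Fatou_integral_real[OF objective_eq_shortfall(1)[OF Is_Ind_c0] shortfall_nonneg
          objective_eq_shortfall(1)[OF I_Ind_c0] shortfall_nonneg shortfall_liminf])
      (use assms objective_eq_shortfall(2)[OF I_Ind_c0] in simp)
  then show ?thesis
    by eventually_elim (simp add: objective_eq_shortfall(2)[OF Is_Ind_c0])
qed

end

lemma objective_attains_SUP: "\<exists>I\<in>Ind_c. (SUP J\<in>Ind_c. ereal (obj J)) = ereal (obj I)"
proof (rule SUP_attained_if_sequentially_usc)
  have "(\<lambda>_. 0) \<in> Ind_c"
    unfolding Ind_c_def Ind_def by simp
  then show "Ind_c \<noteq> {}" by blast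
next
  fix K :: "nat \<Rightarrow> real \<Rightarrow> real" assume K: "\<And>n. K n \<in> Ind_c"
  obtain r I where "strict_mono r" "I \<in> Ind_c0"
    and lim: "\<And>x. (\<lambda>n. zero_extension (K (r n)) x) \<longlonglongrightarrow> I x"
    using Ind_c0_convergent_subsequence[of "\<lambda>n. zero_extension (K n)"] zero_extension_in_Ind_c0[OF K]
    by blast
  have "obj (K n) = obj (zero_extension (K n))" for n
    using X_nonneg by (intro objective_cong) (simp add: zero_extension_def)
  then have "obj I < c \<Longrightarrow> eventually (\<lambda>n. obj (K (r n)) < c) sequentially" for c
    using objective_limsup[of "\<lambda>n. zero_extension (K (r n))" I] zero_extension_in_Ind_c0[OF K]
      \<open>I \<in> Ind_c0\<close> lim by simp
  then show "\<exists>I\<in>Ind_c. \<exists>r. strict_mono r \<and> (\<forall>c. obj I < c \<longrightarrow> eventually (\<lambda>n. obj (K (r n)) < c) sequentially)"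
    using \<open>strict_mono r\<close> \<open>I \<in> Ind_c0\<close> Ind_c0_subset_Ind_c by blast
qed

end

theorem proposition2p2:
  fixes M :: "'a measure" and X :: "'a \<Rightarrow> real" and \<theta> w :: real
    and k u b :: "real \<Rightarrow> real"
  assumes "prob_space M"
    and "X \<in> borel_measurable M" and "\<forall>\<omega>\<in>space M. 0 \<le> X \<omega>" and "integrable M X"
    and "\<theta> > -1"
    and "k \<in> Dset" and "k 1 = 0"
    and "\<exists>u' u''. (\<forall>x. (u has_real_derivative u' x) (at x)) \<and>
                   (\<forall>x. (u' has_real_derivative u'' x) (at x)) \<and> continuous_on UNIV u''"
    and "strict_mono u" and "concave_on UNIV u"
    and "\<exists>b'. continuous_on {0..1} b' \<and>
              (\<forall>x\<in>{0..1}. (b has_real_derivative b' x) (at x within {0..1}))"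
    and "strict_mono_on {0..1} b" and "convex_on {0..1} b" and "b 0 = 0" and "b 1 = 1"
    and "\<forall>I\<in>Ind. I \<in> borel_measurable borel \<longrightarrow>
           rho_finite M k (\<lambda>\<omega>. I (X \<omega>)) \<and>
           rho_finite M b (\<lambda>\<omega>. u (w - X \<omega> + I (X \<omega>) - premium M \<theta> k (\<lambda>\<omega>'. I (X \<omega>'))))"
  shows "\<exists>Istar\<in>Ind_c. (SUP I\<in>Ind_c. ereal (objective M X \<theta> k w u b I))
                        = ereal (objective M X \<theta> k w u b Istar)"
proof -
  obtain u' where "\<forall>x. (u has_real_derivative u' x) (at x)"
    using assms(8) by blast
  then have u_continuous: "continuous_on UNIV u"
    by (intro continuous_at_imp_continuous_on) (auto intro: DERIV_isCont)
  obtain b' where "\<forall>x\<in>{0..1}. (b has_real_derivative b' x) (at x within {0..1})"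
    using assms(11) by blast
  then have b_continuous: "continuous_on {0..1} b"
    unfolding continuous_on_eq_continuous_within by (auto intro: DERIV_continuous)
  interpret indemnity_problem M X \<theta> w k u b
  proof (intro indemnity_problem.intro indemnity_problem_axioms.intro)
    show "mono u" using assms(9) by (rule strict_mono_mono)
    show "mono_on {0..1} b" using assms(12) by (rule strict_mono_on_imp_mono_on)
    show "continuous_on {0..1} k" "\<forall>s\<in>{0..1}. 0 \<le> k s"
      using assms(6) unfolding Dset_def by auto
  qed (use assms u_continuous b_continuous in auto)
  show ?thesis by (rule objective_attains_SUP)
qed

end
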